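(* Let $a>0$, $\phi\in C^{2n}([-a,a])$, and let $(p_j)_{j\in\mathbb{N}}$ be a sequence of real polynomials such that $p_j^{(i)}\to\phi^{(i)}$ uniformly on $[-a,a]$ for all $0\le i\le 2n$. Then for every spherical harmonic $H_l\in\mathcal{H}_l$, \[ \lim_{j\to\infty}\int_{SS,\mathbf{x}}p_j(\langle\mathbf{x},\mathbf{y}\rangle)H_l(\mathbf{x})=\int_{SS,\mathbf{x}}\phi(\langle\mathbf{x},\mathbf{y}\rangle)H_l(\mathbf{x}) \] pointwise as functions of $\underline{y}\in\overline{\mathbb{B}^m(a)}$ (the closed ball of radius $a$ in $\mathbb{R}^m$) with values in the Grassmann algebra generated by ${y\grave{}}_1,\dots,{y\grave{}}_{2n}$.
   Context: Fix integers $m\ge1$, $n\ge0$. Consider two supervectors $\mathbf{x}=(\underline x,\underline x\grave{})=(x_1,\dots,x_m,{x\grave{}}_1,\dots,{x\grave{}}_{2n})$ and $\mathbf{y}=(y_1,\dots,y_m,{y\grave{}}_1,\dots,{y\grave{}}_{2n})$, where the $4n$ variables ${x\grave{}}_i,{y\grave{}}_i$ are mutually anticommuting generators of a Grassmann algebra and commute with the real variables $x_i,y_i$. Fermionic derivatives $\partial_{{x\grave{}}_j}$ satisfy the graded Leibniz rule (they anticommute with all ${x\grave{}}_k$, $k\ne j$, and ${y\grave{}}_k$, and $\partial_{{x\grave{}}_j}{x\grave{}}_j=1$). Inner product: $\langle\mathbf{x},\mathbf{y}\rangle=\langle\underline x,\underline y\rangle+\langle\underline x\grave{},\underline y\grave{}\rangle$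 with $\langle\underline x,\underline y\rangle=\sum_{i=1}^mx_iy_i$ and $\langle\underline x\grave{},\underline y\grave{}\rangle=-\frac12\sum_{j=1}^n({x\grave{}}_{2j-1}{y\grave{}}_{2j}-{x\grave{}}_{2j}{y\grave{}}_{2j-1})$. For $\phi\in C^{2n}([-a,a])$ the super zonal function is $\phi(\langle\mathbf x,\mathbf y\rangle)=\sum_{j=0}^{2n}\frac{\langle\underline x\grave{},\underline y\grave{}\rangle^j}{j!}\phi^{(j)}(\langle\underline x,\underline y\rangle)$. Put $\underline{x}\grave{}^2=\sum_{j=1}^n{x\grave{}}_{2j-1}{x\grave{}}_{2j}$, $R_x^2=|\underline x|^2-\underline{x}\grave{}^2$. The super Laplace operator in $\mathbf{x}$ is $\nabla^2=\sum_i\partial_{x_i}^2-4\sum_j\partial_{{x\grave{}}_{2j-1}}\partial_{{x\grave{}}_{2j}}$, and $\mathcal{H}_l$ is the space of superpolynomials $H\in\mathbb{R}[x_1,\dots,x_m]\otimes\Lambda_{2n}$ (in $\underline x,\underline x\grave{}$), homogeneous of total degree $l$, with $\nabla^2H=0$. The supersphere integral in $\mathbf{x}$ is $\int_{SS,\mathbf x}f=\sum_{j=0}^n\int_{\mathbb{S}^{m-1}}d\underline{\xi}\int_B\frac{\underline{x}\grave{}^{2j}}{j!}\big[(\frac{\partial}{\partial r^2})^jr^{m-2}f\big]_{r=1}$, where $\underline x=r\underline\xi$, $\frac{\partial}{\partial r^2}=\frac1{2r}\frac{\partial}{\partial r}$, $d\underline\xi$ is surface measure on $\mathbb{S}^{m-1}$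 and $\int_B=\pi^{-n}\partial_{{x\grave{}}_{2n}}\cdots\partial_{{x\grave{}}_1}$. *)

theory Defs
  imports "HOL-Analysis.Analysis" "HOL-Computational_Algebra.Polynomial"
begin

text \<open>An element of the real Grassmann algebra is given by its coefficients on the
monomials e_S = g_{s1} g_{s2} ... g_{sk} (s1 < s2 < ... < sk, S finite).
Generator indices: the fermionic variables x'_1..x'_{2n} are the generators 0..2n-1,
the fermionic variables y'_1..y'_{2n} are the generators 2n..4n-1.\<close>

type_synonym grass = "nat set \<Rightarrow> real"

definition gone :: grass where
  "gone = (\<lambda>S. if S = {} then 1 else 0)"

definition gen :: "nat \<Rightarrow> grass" where
  "gen k = (\<lambda>S. if S = {k} then 1 else 0)"

definition gadd :: "grass \<Rightarrow> grass \<Rightarrow> grass" where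
  "gadd A B = (\<lambda>S. A S + B S)"

definition gscale :: "real \<Rightarrow> grass \<Rightarrow> grass" where
  "gscale c A = (\<lambda>S. c * A S)"

definition gsum :: "('i \<Rightarrow> grass) \<Rightarrow> 'i set \<Rightarrow> grass" where
  "gsum f I = (\<lambda>S. \<Sum>i\<in>I. f i S)"

text \<open>sign of e_T e_U = sign * e_{T \<union> U} for disjoint T, U: number of inversions\<close>
definition gsign :: "nat set \<Rightarrow> nat set \<Rightarrow> real" where
  "gsign T U = (-1) ^ card {(t, u). t \<in> T \<and> u \<in> U \<and> u < t}"

definition gmul :: "grass \<Rightarrow> grass \<Rightarrow> grass" where
  "gmul A B = (\<lambda>S. \<Sum>T\<in>Pow S. gsign T (S - T) * A T * B (S - T))"

fun gpow :: "grass \<Rightarrow> nat \<Rightarrow> grass" where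
  "gpow A 0 = gone"
| "gpow A (Suc k) = gmul A (gpow A k)"

text \<open>Fermionic (left) derivative with respect to generator k, graded Leibniz rule:
  \<partial>_k e_T = (-1)^{#{s\<in>T. s<k}} e_{T-{k}} if k \<in> T, and 0 otherwise.\<close>
definition gderiv :: "nat \<Rightarrow> grass \<Rightarrow> grass" where
  "gderiv k A = (\<lambda>S. if k \<in> S then 0 else (-1) ^ card {s\<in>S. s < k} * A (insert k S))"

text \<open>\<langle>x',y'\<rangle> = -1/2 \<Sum>_{j=1}^n (x'_{2j-1} y'_{2j} - x'_{2j} y'_{2j-1})\<close>
definition fip :: "nat \<Rightarrow> grass" where
  "fip n = gscale (-1/2) (gsum (\<lambda>j. gadd (gmul (gen (2*j)) (gen (2*n + 2*j + 1)))
                                        (gscale (-1) (gmul (gen (2*j+1)) (gen (2*n + 2*j))))) {..<n})"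

text \<open>x'^2 = \<Sum>_{j=1}^n x'_{2j-1} x'_{2j}\<close>
definition xsq :: "nat \<Rightarrow> grass" where
  "xsq n = gsum (\<lambda>j. gmul (gen (2*j)) (gen (2*j+1))) {..<n}"

text \<open>Super zonal function d(\<langle>x,y\<rangle>) built from the derivatives d 0, d 1, ... of a function:
  \<Sum>_{k=0}^{2n} \<langle>x',y'\<rangle>^k / k! * d k (\<langle>x,y\<rangle>)\<close>
definition zonal :: "nat \<Rightarrow> (nat \<Rightarrow> real \<Rightarrow> real) \<Rightarrow> real^'m \<Rightarrow> real^'m \<Rightarrow> grass" where
  "zonal n d x y = gsum (\<lambda>k. gscale (d k (x \<bullet> y) / fact k) (gpow (fip n) k)) {0..2*n}"

fun hderiv :: "real set \<Rightarrow> (real \<Rightarrow> real) \<Rightarrow> nat \<Rightarrow> real \<Rightarrow> real" where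
  "hderiv S f 0 = f"
| "hderiv S f (Suc i) = (\<lambda>x. vector_derivative (hderiv S f i) (at x within S))"

definition Ck_on :: "nat \<Rightarrow> real set \<Rightarrow> (real \<Rightarrow> real) \<Rightarrow> bool" where
  "Ck_on k S f \<longleftrightarrow>
     (\<forall>i<k. \<forall>x\<in>S. (hderiv S f i has_real_derivative hderiv S f (Suc i) x) (at x within S))
     \<and> continuous_on S (hderiv S f k)"

definition pd :: "'m::finite \<Rightarrow> (real^'m \<Rightarrow> real) \<Rightarrow> real^'m \<Rightarrow> real" where
  "pd i f x = deriv (\<lambda>t. f (x + t *\<^sub>R axis i 1)) 0"

text \<open>super Laplacian \<nabla>^2 = \<Sum>_i \<partial>_{x_i}^2 - 4 \<Sum>_j \<partial>_{x'_{2j-1}} \<partial>_{x'_{2j}}\<close>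
definition slap :: "nat \<Rightarrow> (real^'m::finite \<Rightarrow> grass) \<Rightarrow> real^'m \<Rightarrow> grass" where
  "slap n H x = (\<lambda>S. (\<Sum>i\<in>UNIV. pd i (pd i (\<lambda>z. H z S)) x)
                    - 4 * (\<Sum>j<n. gderiv (2*j) (gderiv (2*j+1) (H x)) S))"

text \<open>H \<in> \<H>_l: superpolynomial in R[x_1..x_m] \<otimes> \<Lambda>_{2n} (generated by x'_1..x'_{2n}),
  homogeneous of total degree l, and \<nabla>^2 H = 0.\<close>
definition harmonic_space :: "nat \<Rightarrow> nat \<Rightarrow> (real^'m::finite \<Rightarrow> grass) set" where
  "harmonic_space n l = {H.
     (\<forall>S. polynomial_function (\<lambda>x. H x S))
   \<and> (\<forall>S x. \<not> S \<subseteq> {..<2*n} \<longrightarrow> H x S = 0)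
   \<and> (\<forall>S x. l < card S \<longrightarrow> H x S = 0)
   \<and> (\<forall>S x t. card S \<le> l \<longrightarrow> H (t *\<^sub>R x) S = t ^ (l - card S) * H x S)
   \<and> (\<forall>x. slap n H x = (\<lambda>S. 0))}"

text \<open>integral over the unit sphere S^{m-1} w.r.t. surface measure, via the cone
  construction: \<integral>_{S^{m-1}} g d\<xi> = m \<integral>_{|x|\<le>1} g(x/|x|) dx\<close>
definition sphere_int :: "(real^'m::finite \<Rightarrow> real) \<Rightarrow> real" where
  "sphere_int g = real CARD('m) * integral (cball 0 1) (\<lambda>x. g (x /\<^sub>R norm x))"

text \<open>\<partial>/\<partial>r^2 = 1/(2r) \<partial>/\<partial>r, acting coefficientwise; radial derivative taken
  for r in (0,1] (one-sided at r = 1)\<close>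
definition Dr2 :: "(real \<Rightarrow> grass) \<Rightarrow> real \<Rightarrow> grass" where
  "Dr2 g = (\<lambda>r S. vector_derivative (\<lambda>s. g s S) (at r within {0<..1}) / (2 * r))"

fun bder :: "nat \<Rightarrow> grass \<Rightarrow> grass" where
  "bder 0 A = A"
| "bder (Suc k) A = gderiv k (bder k A)"

text \<open>Berezin integral \<integral>_B = \<pi>^{-n} \<partial>_{x'_{2n}} ... \<partial>_{x'_1}\<close>
definition berezin :: "nat \<Rightarrow> grass \<Rightarrow> grass" where
  "berezin n A = gscale (1 / pi ^ n) (bder (2*n) A)"

definition SSI :: "nat \<Rightarrow> (real^'m::finite \<Rightarrow> grass) \<Rightarrow> grass" where
  "SSI n F = gsum (\<lambda>j. (\<lambda>S. sphere_int (\<lambda>\<xi>.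
       berezin n (gmul (gscale (1 / fact j) (gpow (xsq n) j))
          ((Dr2 ^^ j) (\<lambda>r. gscale (r powr (real CARD('m) - 2)) (F (r *\<^sub>R \<xi>))) 1)) S))) {0..n}"

end

theory Submission
  imports Defs
begin

text \<open>Fix a coefficient \<open>S\<close> of the Grassmann algebra. The Berezin integral extracts a single
  coefficient, so the \<open>S\<close>-coefficient of the supersphere integral is a sum of sphere integrals of
  real functions of \<open>\<xi>\<close>, each obtained from coefficients of \<open>r\<^sup>m\<^sup>-\<^sup>2 F(\<langle>r\<xi>, y\<rangle>) H(r\<xi>)\<close>, \<open>F = p\<^sub>j\<close> or \<open>\<phi>\<close>, by
  \<open>k \<le> n\<close> applications of \<open>\<partial>/\<partial>r\<^sup>2\<close>, evaluated at \<open>r = 1\<close>. Expanding the zonal function and using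
  the homogeneity of \<open>H\<close>, each such coefficient is a finite sum of terms \<open>F\<^sup>(\<^sup>i\<^sup>)(r \<xi>\<cdot>y) c(\<xi>) r\<^sup>e\<close>,
  and counting the degree in the generators \<open>x\<acute>\<close> shows that \<open>i\<close> plus the number of radial
  derivatives never exceeds \<open>2n\<close>. Hence the assumed uniform convergence of the derivatives of order
  at most \<open>2n\<close> survives all radial differentiations (tracked uniformly for \<open>\<xi>\<close> on the unit sphere
  and \<open>r \<in> [1/2, 1]\<close>), the integrands converge uniformly in \<open>\<xi>\<close>, and so do their sphere integrals.\<close>

section \<open>Uniform limits of continuous functions\<close>

definition continuous_uniform_limit ::
    "'a::topological_space set \<Rightarrow> (nat \<Rightarrow> 'a \<Rightarrow> 'b::real_normed_algebra) \<Rightarrow> ('a \<Rightarrow> 'b) \<Rightarrow> bool" where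
  "continuous_uniform_limit S fs f \<longleftrightarrow>
     uniform_limit S fs f sequentially \<and> (\<forall>j. continuous_on S (fs j))"

lemma continuous_uniform_limit_continuous:
  "continuous_uniform_limit S fs f \<Longrightarrow> continuous_on S f"
  unfolding continuous_uniform_limit_def
  by (metis always_eventually trivial_limit_sequentially uniform_limit_theorem)

lemma continuous_uniform_limit_const:
  "continuous_on S f \<Longrightarrow> continuous_uniform_limit S (\<lambda>j. f) f"
  by (simp add: continuous_uniform_limit_def uniform_limit_const)

lemma continuous_uniform_limit_add:
  "continuous_uniform_limit S fs f \<Longrightarrow> continuous_uniform_limit S gs g \<Longrightarrow>
   continuous_uniform_limit S (\<lambda>j x. fs j x + gs j x) (\<lambda>x. f x + g x)"
  unfolding continuous_uniform_limit_def by (auto intro: uniform_limit_add continuous_on_add)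

lemma continuous_uniform_limit_cmult:
  "continuous_uniform_limit S fs f \<Longrightarrow>
   continuous_uniform_limit S (\<lambda>j x. c * fs j x) (\<lambda>x. c * f x)"
  unfolding continuous_uniform_limit_def
  by (auto intro: bounded_linear.uniform_limit[OF bounded_linear_mult_right]
      continuous_on_mult continuous_on_const)

lemma continuous_uniform_limit_mult:
  assumes "compact S" "continuous_uniform_limit S fs f" "continuous_uniform_limit S gs g"
  shows "continuous_uniform_limit S (\<lambda>j x. fs j x * gs j x) (\<lambda>x. f x * g x)"
proof -
  have "bounded (f ` S)" "bounded (g ` S)"
    using assms by (auto intro!: compact_imp_bounded compact_continuous_image
        continuous_uniform_limit_continuous)
  with assms show ?thesis
    unfolding continuous_uniform_limit_def by (auto intro: uniform_lim_mult continuous_on_mult)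
qed

lemma continuous_uniform_limit_sum:
  assumes "\<And>i. i \<in> I \<Longrightarrow> continuous_uniform_limit S (fs i) (f i)"
  shows "continuous_uniform_limit S (\<lambda>j x. \<Sum>i\<in>I. fs i j x) (\<lambda>x. \<Sum>i\<in>I. f i x)"
  using assms
proof (induction I rule: infinite_finite_induct)
  case (insert i I)
  then show ?case by (simp add: continuous_uniform_limit_add)
qed (auto intro: continuous_uniform_limit_const)

lemma continuous_uniform_limit_cong:
  assumes "\<And>j x. x \<in> S \<Longrightarrow> fs j x = gs j x" "\<And>x. x \<in> S \<Longrightarrow> f x = g x"
  shows "continuous_uniform_limit S fs f \<longleftrightarrow> continuous_uniform_limit S gs g"
  unfolding continuous_uniform_limit_def using assms
  by (simp add: uniform_limit_cong'[of S fs gs f g] cong: continuous_on_cong)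

lemma continuous_uniform_limit_compose:
  assumes "continuous_uniform_limit S fs f" "continuous_on T h" "h ` T \<subseteq> S"
  shows "continuous_uniform_limit T (\<lambda>j x. fs j (h x)) (\<lambda>x. f (h x))"
  using assms unfolding continuous_uniform_limit_def
  by (auto intro: uniform_limit_compose' continuous_on_compose2)

section \<open>Integration over the unit sphere\<close>

lemma sphere_int_punctured:
  "sphere_int g = real CARD('m) * integral (cball 0 1 - {0}) (\<lambda>x::real^'m::finite. g (x /\<^sub>R norm x))"
  unfolding sphere_int_def
  by (subst integral_spike_set[where T="cball 0 1 - {0}"])
     (auto intro: negligible_subset[OF negligible_sing[of 0]])

lemma normalize_in_sphere: "x \<noteq> 0 \<Longrightarrow> x /\<^sub>R norm x \<in> sphere 0 1"
  by simp

lemma integrable_on_punctured_ball_normalize: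
  fixes h :: "real^'m::finite \<Rightarrow> real"
  assumes "continuous_on (sphere 0 1) h"
  shows "(\<lambda>x. h (x /\<^sub>R norm x)) integrable_on (cball 0 1 - {0})"
proof -
  let ?B = "cball (0::real^'m) 1 - {0}"
  have B: "?B \<in> lmeasurable"
    by (intro fmeasurable_Diff lmeasurable_cball) simp
  have "(\<lambda>x. x /\<^sub>R norm x) ` ?B \<subseteq> sphere 0 1"
    by (intro image_subsetI normalize_in_sphere) simp
  then have "continuous_on ?B (\<lambda>x. h (x /\<^sub>R norm x))"
    by (intro continuous_on_compose2[OF assms] continuous_intros) auto
  then have meas: "(\<lambda>x. h (x /\<^sub>R norm x)) \<in> borel_measurable (lebesgue_on ?B)"
    using B by (intro continuous_imp_measurable_on_sets_lebesgue) (auto simp: fmeasurableD)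
  have "bounded (h ` sphere 0 1)"
    by (intro compact_imp_bounded compact_continuous_image assms) simp
  then obtain C where C: "\<And>\<xi>. \<xi> \<in> sphere 0 1 \<Longrightarrow> norm (h \<xi>) \<le> C"
    unfolding bounded_iff by blast
  have bound: "norm (h (x /\<^sub>R norm x)) \<le> C" if "x \<in> ?B" for x
    using that by (intro C normalize_in_sphere) simp
  show ?thesis
    by (rule measurable_bounded_by_integrable_imp_integrable[OF meas integrable_on_const[OF B]])
       (use bound fmeasurableD[OF B] in auto)
qed

lemma integral_tendsto_uniform_limit:
  fixes fs :: "nat \<Rightarrow> 'n::euclidean_space \<Rightarrow> real"
  assumes S: "S \<in> lmeasurable" and lim: "uniform_limit S fs f sequentially"
    and int: "\<And>j. fs j integrable_on S" "f integrable_on S"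
  shows "(\<lambda>j. integral S (fs j)) \<longlonglongrightarrow> integral S f"
proof (rule tendstoI)
  fix e :: real assume "e > 0"
  define \<mu> where "\<mu> = measure lebesgue S"
  define d where "d = e / (\<mu> + 1)"
  have "\<mu> \<ge> 0" by (simp add: \<mu>_def)
  then have "d > 0" "d * \<mu> < e"
    using \<open>e > 0\<close> by (simp_all add: d_def field_simps)
  from uniform_limitD[OF lim \<open>d > 0\<close>]
  show "\<forall>\<^sub>F j in sequentially. dist (integral S (fs j)) (integral S f) < e"
  proof eventually_elim
    case (elim j)
    have "dist (integral S (fs j)) (integral S f) = norm (integral S (\<lambda>x. fs j x - f x))"
      by (simp add: dist_norm integral_diff int)
    also have "\<dots> \<le> integral S (\<lambda>x. d)"
      using elim by (intro integral_norm_bound_integral integrable_diff int integrable_on_const[OF S])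
        (auto simp: dist_norm less_imp_le)
    also have "\<dots> = d * \<mu>"
      using integral_cmul[where c=d and f="\<lambda>x. 1::real" and S=S]
      by (simp add: \<mu>_def lmeasure_integral[OF S])
    finally show ?case using \<open>d * \<mu> < e\<close> by linarith
  qed
qed

lemma sphere_int_tendsto:
  fixes gs :: "nat \<Rightarrow> real^'m::finite \<Rightarrow> real"
  assumes lim: "continuous_uniform_limit (sphere 0 1) gs g"
  shows "(\<lambda>j. sphere_int (gs j)) \<longlonglongrightarrow> sphere_int g"
proof -
  let ?B = "cball (0::real^'m) 1 - {0}"
  have "(\<lambda>x. x /\<^sub>R norm x) \<in> ?B \<rightarrow> sphere 0 1"
    by (rule Pi_I, rule normalize_in_sphere) simp
  moreover have "uniform_limit (sphere 0 1) gs g sequentially"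
    using lim by (simp add: continuous_uniform_limit_def)
  ultimately have "uniform_limit ?B (\<lambda>j x. gs j (x /\<^sub>R norm x)) (\<lambda>x. g (x /\<^sub>R norm x)) sequentially"
    by (rule uniform_limit_compose'[where h="\<lambda>x. x /\<^sub>R norm x", rotated])
  moreover have "?B \<in> lmeasurable"
    by (intro fmeasurable_Diff lmeasurable_cball) simp
  moreover have "(\<lambda>x. gs j (x /\<^sub>R norm x)) integrable_on ?B" for j
    using lim by (intro integrable_on_punctured_ball_normalize) (simp add: continuous_uniform_limit_def)
  moreover have "(\<lambda>x. g (x /\<^sub>R norm x)) integrable_on ?B"
    using lim by (intro integrable_on_punctured_ball_normalize continuous_uniform_limit_continuous)
  ultimately show ?thesis
    unfolding sphere_int_punctured by (intro tendsto_mult_left integral_tendsto_uniform_limit)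
qed

section \<open>Radial derivatives and uniform convergence\<close>

definition radial_derivative_on ::
    "'a set \<Rightarrow> ('a \<Rightarrow> real \<Rightarrow> real) \<Rightarrow> ('a \<Rightarrow> real \<Rightarrow> real) \<Rightarrow> bool" where
  "radial_derivative_on K f f' \<longleftrightarrow>
     (\<forall>\<xi>\<in>K. \<forall>r\<in>{0<..1}. (f \<xi> has_real_derivative f' \<xi> r) (at r within {0<..1}))"

text \<open>The radius is confined to \<open>[1/2, 1]\<close>, which keeps the factor \<open>1/(2r)\<close> of
  \<open>\<partial>/\<partial>r\<^sup>2\<close> bounded and contains \<open>r = 1\<close>, where the supersphere integral is evaluated;
  derivatives are taken within \<open>(0, 1]\<close>, as in \<^const>\<open>Dr2\<close>.\<close>
fun radial_uniform_limit_upto ::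
    "nat \<Rightarrow> 'a::topological_space set \<Rightarrow> (nat \<Rightarrow> 'a \<Rightarrow> real \<Rightarrow> real) \<Rightarrow> ('a \<Rightarrow> real \<Rightarrow> real) \<Rightarrow> bool"
where
  "radial_uniform_limit_upto 0 K us u \<longleftrightarrow>
     continuous_uniform_limit (K \<times> {1/2..1}) (\<lambda>j z. us j (fst z) (snd z)) (\<lambda>z. u (fst z) (snd z))"
| "radial_uniform_limit_upto (Suc N) K us u \<longleftrightarrow>
     radial_uniform_limit_upto 0 K us u \<and>
     (\<exists>us' u'. (\<forall>j. radial_derivative_on K (us j) (us' j)) \<and> radial_derivative_on K u u' \<and>
        radial_uniform_limit_upto N K us' u')"

lemma radial_uniform_limit_upto_0:
  "radial_uniform_limit_upto N K us u \<Longrightarrow> radial_uniform_limit_upto 0 K us u"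
  by (cases N) auto

lemma radial_uniform_limit_upto_SucI:
  "radial_uniform_limit_upto 0 K us u \<Longrightarrow> (\<And>j. radial_derivative_on K (us j) (us' j)) \<Longrightarrow>
   radial_derivative_on K u u' \<Longrightarrow> radial_uniform_limit_upto N K us' u' \<Longrightarrow>
   radial_uniform_limit_upto (Suc N) K us u"
  by auto

lemma radial_uniform_limit_upto_Suc_mono:
  "radial_uniform_limit_upto (Suc N) K us u \<Longrightarrow> radial_uniform_limit_upto N K us u"
proof (induction N arbitrary: us u)
  case (Suc N)
  then show ?case by (meson radial_uniform_limit_upto.simps(2))
qed auto

lemma radial_derivative_on_add:
  "radial_derivative_on K f f' \<Longrightarrow> radial_derivative_on K g g' \<Longrightarrow>
   radial_derivative_on K (\<lambda>\<xi> r. f \<xi> r + g \<xi> r) (\<lambda>\<xi> r. f' \<xi> r + g' \<xi> r)"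
  unfolding radial_derivative_on_def by (auto intro: derivative_intros)

lemma radial_derivative_on_mult:
  "radial_derivative_on K f f' \<Longrightarrow> radial_derivative_on K g g' \<Longrightarrow>
   radial_derivative_on K (\<lambda>\<xi> r. f \<xi> r * g \<xi> r) (\<lambda>\<xi> r. f' \<xi> r * g \<xi> r + f \<xi> r * g' \<xi> r)"
  unfolding radial_derivative_on_def by (auto intro!: derivative_eq_intros)

lemma radial_uniform_limit_upto_zero:
  "radial_uniform_limit_upto N K (\<lambda>j \<xi> r. 0) (\<lambda>\<xi> r. 0)"
  by (induction N)
     (auto simp: radial_derivative_on_def continuous_uniform_limit_const
        intro!: exI[of _ "\<lambda>j \<xi> r. 0"] exI[of _ "\<lambda>\<xi> r. 0"])

lemma radial_uniform_limit_upto_0_add: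
  assumes "radial_uniform_limit_upto 0 K us u" "radial_uniform_limit_upto 0 K vs v"
  shows "radial_uniform_limit_upto 0 K (\<lambda>j \<xi> r. us j \<xi> r + vs j \<xi> r) (\<lambda>\<xi> r. u \<xi> r + v \<xi> r)"
  using continuous_uniform_limit_add[OF assms[unfolded radial_uniform_limit_upto.simps]] by simp

lemma radial_uniform_limit_upto_0_mult:
  assumes "compact K" "radial_uniform_limit_upto 0 K us u" "radial_uniform_limit_upto 0 K vs v"
  shows "radial_uniform_limit_upto 0 K (\<lambda>j \<xi> r. us j \<xi> r * vs j \<xi> r) (\<lambda>\<xi> r. u \<xi> r * v \<xi> r)"
proof -
  have "compact (K \<times> {1/2..1::real})" using assms by (intro compact_Times) auto
  from continuous_uniform_limit_mult[OF this assms(2,3)[unfolded radial_uniform_limit_upto.simps]]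
  show ?thesis by simp
qed

lemma radial_uniform_limit_upto_add:
  "radial_uniform_limit_upto N K us u \<Longrightarrow> radial_uniform_limit_upto N K vs v \<Longrightarrow>
   radial_uniform_limit_upto N K (\<lambda>j \<xi> r. us j \<xi> r + vs j \<xi> r) (\<lambda>\<xi> r. u \<xi> r + v \<xi> r)"
proof (induction N arbitrary: us u vs v)
  case 0
  then show ?case by (rule radial_uniform_limit_upto_0_add)
next
  case (Suc N)
  from Suc.prems obtain us' u' vs' v' where
    d: "\<forall>j. radial_derivative_on K (us j) (us' j)" "radial_derivative_on K u u'"
       "\<forall>j. radial_derivative_on K (vs j) (vs' j)" "radial_derivative_on K v v'"
    and lim: "radial_uniform_limit_upto N K us' u'" "radial_uniform_limit_upto N K vs' v'"
    by auto
  show ?case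
    unfolding radial_uniform_limit_upto.simps(2)
    using Suc.prems(1,2)[THEN radial_uniform_limit_upto_0] Suc.IH[OF lim] d
    by (intro conjI exI[of _ "\<lambda>j \<xi> r. us' j \<xi> r + vs' j \<xi> r"] exI[of _ "\<lambda>\<xi> r. u' \<xi> r + v' \<xi> r"]
        allI radial_derivative_on_add radial_uniform_limit_upto_0_add) simp_all
qed

lemma radial_uniform_limit_upto_mult:
  assumes "compact K"
  shows "radial_uniform_limit_upto N K us u \<Longrightarrow> radial_uniform_limit_upto N K vs v \<Longrightarrow>
    radial_uniform_limit_upto N K (\<lambda>j \<xi> r. us j \<xi> r * vs j \<xi> r) (\<lambda>\<xi> r. u \<xi> r * v \<xi> r)"
proof (induction N arbitrary: us u vs v)
  case 0
  then show ?case by (rule radial_uniform_limit_upto_0_mult[OF assms])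
next
  case (Suc N)
  from Suc.prems obtain us' u' vs' v' where
    d: "\<forall>j. radial_derivative_on K (us j) (us' j)" "radial_derivative_on K u u'"
       "\<forall>j. radial_derivative_on K (vs j) (vs' j)" "radial_derivative_on K v v'"
    and lim: "radial_uniform_limit_upto N K us' u'" "radial_uniform_limit_upto N K vs' v'"
    by auto
  have "radial_uniform_limit_upto N K
      (\<lambda>j \<xi> r. us' j \<xi> r * vs j \<xi> r + us j \<xi> r * vs' j \<xi> r) (\<lambda>\<xi> r. u' \<xi> r * v \<xi> r + u \<xi> r * v' \<xi> r)"
    using Suc.prems[THEN radial_uniform_limit_upto_Suc_mono]
    by (intro radial_uniform_limit_upto_add Suc.IH lim)
  moreover have "radial_uniform_limit_upto 0 K (\<lambda>j \<xi> r. us j \<xi> r * vs j \<xi> r) (\<lambda>\<xi> r. u \<xi> r * v \<xi> r)"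
    using Suc.prems(1,2)[THEN radial_uniform_limit_upto_0] by (rule radial_uniform_limit_upto_0_mult[OF assms])
  ultimately show ?case
    unfolding radial_uniform_limit_upto.simps(2)
    using d by (intro conjI exI allI) (auto intro!: radial_derivative_on_mult)
qed

lemma radial_uniform_limit_upto_sum:
  assumes "\<And>i. i \<in> I \<Longrightarrow> radial_uniform_limit_upto N K (us i) (u i)"
  shows "radial_uniform_limit_upto N K (\<lambda>j \<xi> r. \<Sum>i\<in>I. us i j \<xi> r) (\<lambda>\<xi> r. \<Sum>i\<in>I. u i \<xi> r)"
  using assms
proof (induction I rule: infinite_finite_induct)
  case (insert i I)
  then show ?case by (simp add: radial_uniform_limit_upto_add)
qed (simp_all add: radial_uniform_limit_upto_zero)

lemma radial_derivative_on_cong: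
  assumes "radial_derivative_on K f f'" "\<And>\<xi> r. \<xi> \<in> K \<Longrightarrow> r \<in> {0<..1} \<Longrightarrow> f \<xi> r = g \<xi> r"
  shows "radial_derivative_on K g f'"
  using assms unfolding radial_derivative_on_def
  by (metis has_field_derivative_transform_within zero_less_one)

lemma radial_uniform_limit_upto_cong:
  assumes lim: "radial_uniform_limit_upto N K us u"
    and eq: "\<And>j \<xi> r. \<xi> \<in> K \<Longrightarrow> r \<in> {0<..1} \<Longrightarrow> us j \<xi> r = vs j \<xi> r"
      "\<And>\<xi> r. \<xi> \<in> K \<Longrightarrow> r \<in> {0<..1} \<Longrightarrow> u \<xi> r = v \<xi> r"
  shows "radial_uniform_limit_upto N K vs v"
proof -
  have "continuous_uniform_limit (K \<times> {1/2..1}) (\<lambda>j z. us j (fst z) (snd z)) (\<lambda>z. u (fst z) (snd z))"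
    using radial_uniform_limit_upto_0[OF lim] by simp
  moreover have "continuous_uniform_limit (K \<times> {1/2..1}) (\<lambda>j z. us j (fst z) (snd z)) (\<lambda>z. u (fst z) (snd z))
      \<longleftrightarrow> continuous_uniform_limit (K \<times> {1/2..1}) (\<lambda>j z. vs j (fst z) (snd z)) (\<lambda>z. v (fst z) (snd z))"
    by (rule continuous_uniform_limit_cong) (auto simp: mem_Times_iff intro!: eq)
  ultimately have base: "radial_uniform_limit_upto 0 K vs v"
    by simp
  show ?thesis
  proof (cases N)
    case (Suc M)
    with lim obtain us' u' where d:
      "\<forall>j. radial_derivative_on K (us j) (us' j)" "radial_derivative_on K u u'"
      and "radial_uniform_limit_upto M K us' u'"
      by auto
    moreover have "\<forall>j. radial_derivative_on K (vs j) (us' j)" "radial_derivative_on K v u'"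
      using d eq by (blast intro: radial_derivative_on_cong)+
    ultimately show ?thesis
      using base Suc by (simp only: radial_uniform_limit_upto.simps) blast
  qed (use base in simp)
qed

lemma radial_uniform_limit_upto_powr:
  assumes "continuous_on K c"
  shows "radial_uniform_limit_upto N K (\<lambda>j \<xi> r. c \<xi> * r powr e) (\<lambda>\<xi> r. c \<xi> * r powr e)"
  using assms
proof (induction N arbitrary: c e)
  case 0
  have "continuous_on (K \<times> {1/2..1}) (\<lambda>z. c (fst z) * snd z powr e)"
    by (intro continuous_intros continuous_on_compose2[OF 0]) auto
  then show ?case by (simp add: continuous_uniform_limit_const)
next
  case (Suc N)
  have "radial_derivative_on K (\<lambda>\<xi> r. c \<xi> * r powr e) (\<lambda>\<xi> r. (c \<xi> * e) * r powr (e - 1))"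
    unfolding radial_derivative_on_def by (auto intro!: derivative_eq_intros)
  moreover have "radial_uniform_limit_upto N K (\<lambda>j \<xi> r. (c \<xi> * e) * r powr (e - 1))
      (\<lambda>\<xi> r. (c \<xi> * e) * r powr (e - 1))"
    using Suc by (intro Suc.IH continuous_intros)
  moreover have "radial_uniform_limit_upto 0 K (\<lambda>j \<xi> r. c \<xi> * r powr e) (\<lambda>\<xi> r. c \<xi> * r powr e)"
    using Suc.prems by (rule Suc.IH[THEN radial_uniform_limit_upto_0])
  ultimately show ?case by auto
qed

lemma radial_uniform_limit_upto_const:
  assumes "continuous_on K c"
  shows "radial_uniform_limit_upto N K (\<lambda>j \<xi> r. c \<xi>) (\<lambda>\<xi> r. c \<xi>)"
  by (rule radial_uniform_limit_upto_cong[OF radial_uniform_limit_upto_powr[OF assms, of N 0]]) auto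

definition Dr2_real :: "(real \<Rightarrow> real) \<Rightarrow> real \<Rightarrow> real" where
  "Dr2_real f r = vector_derivative f (at r within {0<..1}) / (2 * r)"

lemma Dr2_funpow_Suc:
  "(Dr2 ^^ Suc N) g r S = vector_derivative (\<lambda>s. (Dr2 ^^ N) g s S) (at r within {0<..1}) / (2 * r)"
  by (simp add: Dr2_def)

lemma Dr2_real_funpow_Suc:
  "(Dr2_real ^^ Suc N) f r = vector_derivative ((Dr2_real ^^ N) f) (at r within {0<..1}) / (2 * r)"
  by (simp add: Dr2_real_def)

lemma Dr2_funpow_apply: "(Dr2 ^^ N) g r S = (Dr2_real ^^ N) (\<lambda>r. g r S) r"
proof (induction N arbitrary: r)
  case (Suc N)
  have "(\<lambda>s. (Dr2 ^^ N) g s S) = (Dr2_real ^^ N) (\<lambda>r. g r S)"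
    using Suc.IH by blast
  then show ?case by (simp only: Dr2_funpow_Suc Dr2_real_funpow_Suc)
qed simp

lemma Dr2_real_funpow_cong:
  assumes "\<And>r. r \<in> {0<..1} \<Longrightarrow> f r = g r" "r \<in> {0<..1}"
  shows "(Dr2_real ^^ N) f r = (Dr2_real ^^ N) g r"
  using assms(2)
proof (induction N arbitrary: r)
  case (Suc N)
  have "vector_derivative ((Dr2_real ^^ N) f) (at r within {0<..1})
      = vector_derivative ((Dr2_real ^^ N) g) (at r within {0<..1})"
    using Suc by (intro vector_derivative_cong_eq always_eventually) auto
  then show ?case by (simp only: Dr2_real_funpow_Suc)
qed (use assms in simp)

lemma Dr2_real_eq:
  assumes "r \<in> {0<..1}" "(f has_real_derivative f') (at r within {0<..1})"
  shows "Dr2_real f r = f' * (1/2 * r powr -1)"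
proof -
  have "at r within {0<..1} \<noteq> bot"
    using assms(1) by (simp add: trivial_limit_within)
  moreover have "(f has_vector_derivative f') (at r within {0<..1})"
    using assms(2) by (simp add: has_real_derivative_iff_has_vector_derivative)
  ultimately have "vector_derivative f (at r within {0<..1}) = f'"
    by (rule vector_derivative_within)
  then show ?thesis
    using assms(1) by (simp add: Dr2_real_def powr_minus divide_simps)
qed

lemma radial_uniform_limit_upto_Dr2_real:
  assumes "compact K"
  shows "radial_uniform_limit_upto N K us u \<Longrightarrow>
    continuous_uniform_limit K (\<lambda>j \<xi>. (Dr2_real ^^ N) (us j \<xi>) 1) (\<lambda>\<xi>. (Dr2_real ^^ N) (u \<xi>) 1)"
proof (induction N arbitrary: us u)
  case 0
  have "continuous_uniform_limit K (\<lambda>j \<xi>. us j (fst (\<xi>, 1::real)) (snd (\<xi>, 1::real)))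
      (\<lambda>\<xi>. u (fst (\<xi>, 1::real)) (snd (\<xi>, 1::real)))"
    using 0 by (intro continuous_uniform_limit_compose[where h="\<lambda>\<xi>. (\<xi>, 1)"] continuous_intros) auto
  then show ?case by simp
next
  case (Suc N)
  then obtain us' u' where d: "\<forall>j. radial_derivative_on K (us j) (us' j)" "radial_derivative_on K u u'"
    and lim: "radial_uniform_limit_upto N K us' u'"
    by auto
  have "radial_uniform_limit_upto N K (\<lambda>j \<xi> r. us' j \<xi> r * (1/2 * r powr -1)) (\<lambda>\<xi> r. u' \<xi> r * (1/2 * r powr -1))"
    by (rule radial_uniform_limit_upto_mult[OF assms lim radial_uniform_limit_upto_powr]) simp
  note IH = Suc.IH[OF this]
  have step: "(Dr2_real ^^ Suc N) (f \<xi>) 1 = (Dr2_real ^^ N) (\<lambda>r. f' \<xi> r * (1/2 * r powr -1)) 1"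
    if "radial_derivative_on K f f'" "\<xi> \<in> K" for f f' \<xi>
    unfolding funpow_Suc_right comp_def
    using that by (intro Dr2_real_funpow_cong Dr2_real_eq) (auto simp: radial_derivative_on_def)
  have "continuous_uniform_limit K (\<lambda>j \<xi>. (Dr2_real ^^ Suc N) (us j \<xi>) 1) (\<lambda>\<xi>. (Dr2_real ^^ Suc N) (u \<xi>) 1)
    \<longleftrightarrow> continuous_uniform_limit K (\<lambda>j \<xi>. (Dr2_real ^^ N) (\<lambda>r. us' j \<xi> r * (1/2 * r powr -1)) 1)
         (\<lambda>\<xi>. (Dr2_real ^^ N) (\<lambda>r. u' \<xi> r * (1/2 * r powr -1)) 1)"
    using d by (intro continuous_uniform_limit_cong step) auto
  with IH show ?case by blast
qed

section \<open>Degree in the generators \<open>x\<acute>\<close> and the Berezin integral\<close>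

definition has_xdegree :: "nat \<Rightarrow> grass \<Rightarrow> nat \<Rightarrow> bool" where
  "has_xdegree n A d \<longleftrightarrow> (\<forall>S. A S \<noteq> 0 \<longrightarrow> card (S \<inter> {..<2*n}) = d)"

lemma has_xdegree_gone: "has_xdegree n gone 0"
  by (simp add: has_xdegree_def gone_def)

lemma has_xdegree_gen: "has_xdegree n (gen k) (if k < 2*n then 1 else 0)"
  by (simp add: has_xdegree_def gen_def)

lemma has_xdegree_gmul:
  assumes "has_xdegree n A a" "has_xdegree n B b"
  shows "has_xdegree n (gmul A B) (a + b)"
  unfolding has_xdegree_def
proof (intro allI impI)
  fix S assume "gmul A B S \<noteq> 0"
  then obtain T where T: "T \<subseteq> S" "A T \<noteq> 0" "B (S - T) \<noteq> 0"
    unfolding gmul_def by (auto elim: sum.not_neutral_contains_not_neutral)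
  have "S \<inter> {..<2*n} = (T \<inter> {..<2*n}) \<union> ((S - T) \<inter> {..<2*n})"
    using T(1) by auto
  moreover have "card (T \<inter> {..<2*n} \<union> (S - T) \<inter> {..<2*n}) = card (T \<inter> {..<2*n}) + card ((S - T) \<inter> {..<2*n})"
    by (rule card_Un_disjoint) auto
  ultimately have "card (S \<inter> {..<2*n}) = card (T \<inter> {..<2*n}) + card ((S - T) \<inter> {..<2*n})"
    by simp
  then show "card (S \<inter> {..<2*n}) = a + b"
    using assms T(2,3) unfolding has_xdegree_def by simp
qed

lemma has_xdegree_gadd: "has_xdegree n A d \<Longrightarrow> has_xdegree n B d \<Longrightarrow> has_xdegree n (gadd A B) d"
  unfolding has_xdegree_def gadd_def by force

lemma has_xdegree_gscale: "has_xdegree n A d \<Longrightarrow> has_xdegree n (gscale c A) d"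
  unfolding has_xdegree_def gscale_def by force

lemma has_xdegree_gsum: "(\<And>i. i \<in> I \<Longrightarrow> has_xdegree n (f i) d) \<Longrightarrow> has_xdegree n (gsum f I) d"
  unfolding has_xdegree_def gsum_def by (meson sum.not_neutral_contains_not_neutral)

lemma has_xdegree_gpow: "has_xdegree n A a \<Longrightarrow> has_xdegree n (gpow A k) (k * a)"
  by (induction k) (auto simp: has_xdegree_gone dest: has_xdegree_gmul)

lemma has_xdegree_gmul_gen:
  "has_xdegree n (gmul (gen k) (gen l)) ((if k < 2*n then 1 else 0) + (if l < 2*n then 1 else 0))"
  by (rule has_xdegree_gmul[OF has_xdegree_gen has_xdegree_gen])

lemma has_xdegree_fip: "has_xdegree n (fip n) 1"
  unfolding fip_def
proof (intro has_xdegree_gscale has_xdegree_gsum has_xdegree_gadd)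
  fix j assume "j \<in> {..<n}"
  then show "has_xdegree n (gmul (gen (2*j)) (gen (2*n + 2*j + 1))) 1"
    and "has_xdegree n (gmul (gen (2*j + 1)) (gen (2*n + 2*j))) 1"
    using has_xdegree_gmul_gen[of n "2*j" "2*n + 2*j + 1"] has_xdegree_gmul_gen[of n "2*j + 1" "2*n + 2*j"]
    by simp_all
qed

lemma has_xdegree_xsq: "has_xdegree n (xsq n) 2"
  unfolding xsq_def
proof (intro has_xdegree_gsum)
  fix j assume "j \<in> {..<n}"
  then show "has_xdegree n (gmul (gen (2*j)) (gen (2*j + 1))) 2"
    using has_xdegree_gmul_gen[of n "2*j" "2*j + 1"] by (simp add: numeral_2_eq_2)
qed

lemma bder_apply: "\<exists>c. \<forall>A. bder k A S = c * A (S \<union> {..<k})"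
proof (induction k arbitrary: S)
  case (Suc k)
  show ?case
  proof (cases "k \<in> S")
    case False
    obtain c where "\<forall>A. bder k A (insert k S) = c * A (insert k S \<union> {..<k})"
      using Suc.IH by blast
    moreover have "insert k S \<union> {..<k} = S \<union> {..<Suc k}" by auto
    ultimately show ?thesis
      using False by (auto simp: gderiv_def)
  qed (simp add: gderiv_def)
qed simp

lemma berezin_gmul_apply:
  obtains c where "\<And>A B. berezin n (gmul A B) S =
    c * (\<Sum>T\<in>Pow (S \<union> {..<2*n}). gsign T (S \<union> {..<2*n} - T) * A T * B (S \<union> {..<2*n} - T))"
proof -
  obtain c where "\<forall>A. bder (2*n) A S = c * A (S \<union> {..<2*n})"
    using bder_apply by blast
  then show thesis
    by (intro that[of "c / pi ^ n"]) (simp add: berezin_def gscale_def gmul_def)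
qed

lemma continuous_uniform_limit_berezin_Dr2:
  fixes Fs :: "nat \<Rightarrow> 'a::topological_space \<Rightarrow> real \<Rightarrow> grass" and F :: "'a \<Rightarrow> real \<Rightarrow> grass"
  assumes "compact K" "k \<le> n"
    and lim: "\<And>U. k + card (U \<inter> {..<2*n}) \<le> 2*n \<Longrightarrow>
      radial_uniform_limit_upto k K (\<lambda>j \<xi> r. Fs j \<xi> r U) (\<lambda>\<xi> r. F \<xi> r U)"
  shows "continuous_uniform_limit K
    (\<lambda>j \<xi>. berezin n (gmul (gscale (1 / fact k) (gpow (xsq n) k)) ((Dr2 ^^ k) (Fs j \<xi>) 1)) S)
    (\<lambda>\<xi>. berezin n (gmul (gscale (1 / fact k) (gpow (xsq n) k)) ((Dr2 ^^ k) (F \<xi>) 1)) S)"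
proof -
  define C where "C = gscale (1 / fact k) (gpow (xsq n) k)"
  define T where "T = S \<union> {..<2*n}"
  obtain c where c: "\<And>A B. berezin n (gmul A B) S =
      c * (\<Sum>V\<in>Pow T. gsign V (T - V) * A V * B (T - V))"
    unfolding T_def using berezin_gmul_apply by blast
  have summand: "continuous_uniform_limit K
      (\<lambda>j \<xi>. gsign V (T - V) * C V * (Dr2_real ^^ k) (\<lambda>r. Fs j \<xi> r (T - V)) 1)
      (\<lambda>\<xi>. gsign V (T - V) * C V * (Dr2_real ^^ k) (\<lambda>r. F \<xi> r (T - V)) 1)" for V
  proof (cases "C V = 0")
    case True
    then show ?thesis by (simp add: continuous_uniform_limit_const)
  next
    case False
    have "has_xdegree n C (k * 2)"
      unfolding C_def by (intro has_xdegree_gscale has_xdegree_gpow has_xdegree_xsq)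
    then have "card (V \<inter> {..<2*n}) = 2 * k"
      using False by (simp add: has_xdegree_def)
    moreover have "(T - V) \<inter> {..<2*n} = {..<2*n} - V \<inter> {..<2*n}"
      unfolding T_def by auto
    ultimately have "card ((T - V) \<inter> {..<2*n}) = 2*n - 2*k"
      by (simp add: card_Diff_subset)
    then have "radial_uniform_limit_upto k K (\<lambda>j \<xi> r. Fs j \<xi> r (T - V)) (\<lambda>\<xi> r. F \<xi> r (T - V))"
      using \<open>k \<le> n\<close> by (intro lim) simp
    then show ?thesis
      by (intro continuous_uniform_limit_cmult radial_uniform_limit_upto_Dr2_real \<open>compact K\<close>)
  qed
  show ?thesis
    unfolding C_def[symmetric] c Dr2_funpow_apply mult.assoc[symmetric]
    by (intro continuous_uniform_limit_cmult continuous_uniform_limit_sum summand)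
qed

section \<open>Zonal functions times spherical harmonics\<close>

lemma harmonic_space_scaleR:
  assumes "H \<in> harmonic_space n l"
  shows "H (r *\<^sub>R \<xi>) S = r ^ (l - card S) * H \<xi> S"
  using assms unfolding harmonic_space_def by (cases "card S \<le> l") auto

lemma harmonic_space_continuous_on:
  "H \<in> harmonic_space n l \<Longrightarrow> continuous_on X (\<lambda>\<xi>. H \<xi> S)"
  unfolding harmonic_space_def by (intro continuous_on_polymonial_function) blast

lemma zonal_gmul_harmonic_expand:
  fixes H :: "real^'m::finite \<Rightarrow> grass" and \<xi> y :: "real^'m"
  assumes "H \<in> harmonic_space n l" "r > 0"
  shows "r powr e * gmul (zonal n d (r *\<^sub>R \<xi>) y) (H (r *\<^sub>R \<xi>)) U =
    (\<Sum>V\<in>Pow U. \<Sum>k\<in>{0..2*n}. d k (r * (\<xi> \<bullet> y)) *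
      (gsign V (U - V) * gpow (fip n) k V / fact k * H \<xi> (U - V) * r powr (e + real (l - card (U - V)))))"
proof -
  have "gmul (zonal n d (r *\<^sub>R \<xi>) y) (H (r *\<^sub>R \<xi>)) U =
     (\<Sum>V\<in>Pow U. gsign V (U - V) * (\<Sum>k\<in>{0..2*n}. d k (r * (\<xi> \<bullet> y)) / fact k * gpow (fip n) k V)
        * (r powr real (l - card (U - V)) * H \<xi> (U - V)))"
    using assms by (simp add: gmul_def zonal_def gsum_def gscale_def harmonic_space_scaleR powr_realpow)
  then show ?thesis
    by (simp add: powr_add sum_distrib_left sum_distrib_right algebra_simps)
qed

lemma abs_mult_le_of_unit_factor: "0 \<le> s \<Longrightarrow> s \<le> 1 \<Longrightarrow> \<bar>x\<bar> \<le> a \<Longrightarrow> \<bar>s * x\<bar> \<le> (a::real)"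
  by (simp add: abs_mult) (meson abs_ge_zero mult_left_le_one_le order_trans)

lemma radial_derivative_on_scaled:
  assumes "\<And>x. x \<in> {-a..a} \<Longrightarrow> (f has_real_derivative f' x) (at x within {-a..a})"
    and "\<And>\<xi>. \<xi> \<in> K \<Longrightarrow> \<bar>c \<xi>\<bar> \<le> a"
  shows "radial_derivative_on K (\<lambda>\<xi> r. f (r * c \<xi>)) (\<lambda>\<xi> r. f' (r * c \<xi>) * c \<xi>)"
  unfolding radial_derivative_on_def
proof (intro ballI)
  fix \<xi> r assume "\<xi> \<in> K" "r \<in> {0<..1::real}"
  have mem: "s * c \<xi> \<in> {-a..a}" if "s \<in> {0<..1}" for s
    using that assms(2)[OF \<open>\<xi> \<in> K\<close>] abs_mult_le_of_unit_factor[of s "c \<xi>" a]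
    by (auto simp: abs_le_iff)
  then have sub: "(\<lambda>s. s * c \<xi>) ` {0<..1} \<subseteq> {-a..a}"
    by blast
  have "(f has_real_derivative f' (r * c \<xi>)) (at (r * c \<xi>) within (\<lambda>s. s * c \<xi>) ` {0<..1})"
    using sub mem[OF \<open>r \<in> {0<..1}\<close>] by (intro DERIV_subset[OF assms(1)])
  from DERIV_image_chain[OF this DERIV_cmult_right[OF DERIV_ident]]
  show "((\<lambda>r. f (r * c \<xi>)) has_real_derivative f' (r * c \<xi>) * c \<xi>) (at r within {0<..1})"
    by (simp add: o_def)
qed

text \<open>\<open>qs i j\<close> stands for \<open>p\<^sub>j\<^sup>(\<^sup>i\<^sup>)\<close> and \<open>Q i\<close> for \<open>\<phi>\<^sup>(\<^sup>i\<^sup>)\<close>.\<close>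
locale uniform_derivative_limit =
  fixes a :: real and M :: nat and qs :: "nat \<Rightarrow> nat \<Rightarrow> real \<Rightarrow> real" and Q :: "nat \<Rightarrow> real \<Rightarrow> real"
  assumes qs_deriv: "\<And>i j x. i < M \<Longrightarrow> x \<in> {-a..a} \<Longrightarrow>
      (qs i j has_real_derivative qs (Suc i) j x) (at x within {-a..a})"
    and Q_deriv: "\<And>i x. i < M \<Longrightarrow> x \<in> {-a..a} \<Longrightarrow>
      (Q i has_real_derivative Q (Suc i) x) (at x within {-a..a})"
    and qs_continuous: "\<And>i j. i \<le> M \<Longrightarrow> continuous_on {-a..a} (qs i j)"
    and qs_uniform_limit: "\<And>i. i \<le> M \<Longrightarrow> uniform_limit {-a..a} (qs i) (Q i) sequentially"
begin

lemma radial_uniform_limit_upto_scaled: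
  assumes "compact K" "continuous_on K c" "\<And>\<xi>. \<xi> \<in> K \<Longrightarrow> \<bar>c \<xi>\<bar> \<le> a"
  shows "i + N \<le> M \<Longrightarrow> radial_uniform_limit_upto N K (\<lambda>j \<xi> r. qs i j (r * c \<xi>)) (\<lambda>\<xi> r. Q i (r * c \<xi>))"
proof (induction N arbitrary: i)
  case 0
  have "continuous_uniform_limit {-a..a} (qs i) (Q i)"
    using 0 by (simp add: continuous_uniform_limit_def qs_uniform_limit qs_continuous)
  moreover have "snd z * c (fst z) \<in> {-a..a}" if "z \<in> K \<times> {1/2..1}" for z
    using that assms(3)[of "fst z"] abs_mult_le_of_unit_factor[of "snd z" "c (fst z)" a]
    by (auto simp: abs_le_iff mem_Times_iff)
  moreover have "continuous_on (K \<times> {1/2..1}) (\<lambda>z. snd z * c (fst z))"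
    by (intro continuous_intros continuous_on_compose2[OF assms(2)]) auto
  ultimately have "continuous_uniform_limit (K \<times> {1/2..1})
      (\<lambda>j z. qs i j (snd z * c (fst z))) (\<lambda>z. Q i (snd z * c (fst z)))"
    by (intro continuous_uniform_limit_compose[where h="\<lambda>z. snd z * c (fst z)"] image_subsetI)
  then show ?case by simp
next
  case (Suc N)
  have "radial_uniform_limit_upto 0 K (\<lambda>j \<xi> r. qs i j (r * c \<xi>)) (\<lambda>\<xi> r. Q i (r * c \<xi>))"
    using Suc.prems by (intro Suc.IH[THEN radial_uniform_limit_upto_0]) simp
  moreover have "radial_derivative_on K (\<lambda>\<xi> r. qs i j (r * c \<xi>)) (\<lambda>\<xi> r. qs (Suc i) j (r * c \<xi>) * c \<xi>)" for j
    using Suc.prems by (intro radial_derivative_on_scaled[where a=a] qs_deriv assms(3)) auto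
  moreover have "radial_derivative_on K (\<lambda>\<xi> r. Q i (r * c \<xi>)) (\<lambda>\<xi> r. Q (Suc i) (r * c \<xi>) * c \<xi>)"
    using Suc.prems by (intro radial_derivative_on_scaled[where a=a] Q_deriv assms(3)) auto
  moreover have "radial_uniform_limit_upto N K
      (\<lambda>j \<xi> r. qs (Suc i) j (r * c \<xi>) * c \<xi>) (\<lambda>\<xi> r. Q (Suc i) (r * c \<xi>) * c \<xi>)"
    using Suc by (intro radial_uniform_limit_upto_mult radial_uniform_limit_upto_const assms(1,2) Suc.IH) simp
  ultimately show ?case
    by (rule radial_uniform_limit_upto_SucI)
qed

lemma radial_uniform_limit_upto_zonal_harmonic:
  fixes H :: "real^'m::finite \<Rightarrow> grass" and y :: "real^'m"
  assumes H: "H \<in> harmonic_space n l" and "y \<in> cball 0 a" and NU: "N + card (U \<inter> {..<2*n}) \<le> M"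
  shows "radial_uniform_limit_upto N (sphere 0 1)
    (\<lambda>j \<xi> r. r powr e * gmul (zonal n (\<lambda>i. qs i j) (r *\<^sub>R \<xi>) y) (H (r *\<^sub>R \<xi>)) U)
    (\<lambda>\<xi> r. r powr e * gmul (zonal n Q (r *\<^sub>R \<xi>) y) (H (r *\<^sub>R \<xi>)) U)"
proof -
  let ?K = "sphere (0::real^'m) 1"
  define w where "w V k \<xi> = gsign V (U - V) * gpow (fip n) k V / fact k * H \<xi> (U - V)" for V k \<xi>
  define e' where "e' V = e + real (l - card (U - V))" for V
  have "\<bar>\<xi> \<bullet> y\<bar> \<le> a" if "\<xi> \<in> ?K" for \<xi>
    using that \<open>y \<in> cball 0 a\<close> Cauchy_Schwarz_ineq2[of \<xi> y] by simp
  then have scaled: "radial_uniform_limit_upto N ?K (\<lambda>j \<xi> r. qs k j (r * (\<xi> \<bullet> y))) (\<lambda>\<xi> r. Q k (r * (\<xi> \<bullet> y)))"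
    if "k + N \<le> M" for k
    using that by (intro radial_uniform_limit_upto_scaled continuous_intros) auto
  have summand: "radial_uniform_limit_upto N ?K
      (\<lambda>j \<xi> r. qs k j (r * (\<xi> \<bullet> y)) * (w V k \<xi> * r powr e' V))
      (\<lambda>\<xi> r. Q k (r * (\<xi> \<bullet> y)) * (w V k \<xi> * r powr e' V))"
    if "V \<in> Pow U" for V k
  proof (cases "gpow (fip n) k V = 0")
    case True
    then show ?thesis
      by (intro radial_uniform_limit_upto_cong[OF radial_uniform_limit_upto_zero]) (simp_all add: w_def)
  next
    case False
    have "has_xdegree n (gpow (fip n) k) (k * 1)"
      by (rule has_xdegree_gpow[OF has_xdegree_fip])
    then have "card (V \<inter> {..<2*n}) = k"
      using False by (simp add: has_xdegree_def)
    moreover have "card (V \<inter> {..<2*n}) \<le> card (U \<inter> {..<2*n})"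
      using that by (intro card_mono) auto
    ultimately have "k + N \<le> M"
      using NU by simp
    moreover have "continuous_on ?K (w V k)"
      unfolding w_def using H by (intro continuous_intros harmonic_space_continuous_on)
    ultimately show ?thesis
      by (intro radial_uniform_limit_upto_mult radial_uniform_limit_upto_powr scaled) auto
  qed
  have "radial_uniform_limit_upto N ?K
      (\<lambda>j \<xi> r. \<Sum>V\<in>Pow U. \<Sum>k\<in>{0..2*n}. qs k j (r * (\<xi> \<bullet> y)) * (w V k \<xi> * r powr e' V))
      (\<lambda>\<xi> r. \<Sum>V\<in>Pow U. \<Sum>k\<in>{0..2*n}. Q k (r * (\<xi> \<bullet> y)) * (w V k \<xi> * r powr e' V))"
    by (intro radial_uniform_limit_upto_sum summand)
  then show ?thesis
    by (rule radial_uniform_limit_upto_cong)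
       (simp_all add: zonal_gmul_harmonic_expand[OF H] w_def e'_def mult.assoc)
qed

lemma SSI_zonal_harmonic_tendsto:
  fixes H :: "real^'m::finite \<Rightarrow> grass" and y :: "real^'m"
  assumes "H \<in> harmonic_space n l" "y \<in> cball 0 a" "2*n \<le> M"
  shows "(\<lambda>j. SSI n (\<lambda>x. gmul (zonal n (\<lambda>i. qs i j) x y) (H x)) S)
    \<longlonglongrightarrow> SSI n (\<lambda>x. gmul (zonal n Q x y) (H x)) S"
proof -
  define e where "e = real CARD('m) - 2"
  have "continuous_uniform_limit (sphere 0 1)
      (\<lambda>j \<xi>. berezin n (gmul (gscale (1 / fact k) (gpow (xsq n) k))
        ((Dr2 ^^ k) (\<lambda>r. gscale (r powr e) (gmul (zonal n (\<lambda>i. qs i j) (r *\<^sub>R \<xi>) y) (H (r *\<^sub>R \<xi>)))) 1)) S)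
      (\<lambda>\<xi>. berezin n (gmul (gscale (1 / fact k) (gpow (xsq n) k))
        ((Dr2 ^^ k) (\<lambda>r. gscale (r powr e) (gmul (zonal n Q (r *\<^sub>R \<xi>) y) (H (r *\<^sub>R \<xi>)))) 1)) S)"
    if "k \<in> {0..n}" for k
    using that assms
    by (intro continuous_uniform_limit_berezin_Dr2)
       (auto simp: gscale_def intro!: radial_uniform_limit_upto_zonal_harmonic)
  then show ?thesis
    unfolding SSI_def gsum_def e_def[symmetric] by (intro tendsto_sum sphere_int_tendsto)
qed

end

theorem lemma22:
  fixes n l :: nat and a :: real and \<phi> :: "real \<Rightarrow> real"
    and p :: "nat \<Rightarrow> real poly" and H :: "real^'m::finite \<Rightarrow> grass" and y :: "real^'m"
  assumes "a > 0"
    and "Ck_on (2*n) {-a..a} \<phi>"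
    and "\<forall>i\<le>2*n. uniform_limit {-a..a} (\<lambda>j. poly ((pderiv ^^ i) (p j)))
                                       (hderiv {-a..a} \<phi> i) sequentially"
    and "H \<in> harmonic_space n l"
    and "y \<in> cball 0 a"
  shows "\<forall>S. (\<lambda>j. SSI n (\<lambda>x. gmul (zonal n (\<lambda>i. poly ((pderiv ^^ i) (p j))) x y) (H x)) S)
             \<longlonglongrightarrow> SSI n (\<lambda>x. gmul (zonal n (hderiv {-a..a} \<phi>) x y) (H x)) S"
proof
  fix S
  interpret uniform_derivative_limit a "2*n" "\<lambda>i j. poly ((pderiv ^^ i) (p j))" "hderiv {-a..a} \<phi>"
  proof
    show "((\<lambda>x. poly ((pderiv ^^ i) (p j)) x) has_real_derivative poly ((pderiv ^^ Suc i) (p j)) x)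
        (at x within {-a..a})" for i j x
      by (simp add: has_field_derivative_at_within)
    show "(hderiv {-a..a} \<phi> i has_real_derivative hderiv {-a..a} \<phi> (Suc i) x) (at x within {-a..a})"
      if "i < 2*n" "x \<in> {-a..a}" for i x
      using assms(2) that by (simp add: Ck_on_def)
  qed (use assms(3) in \<open>auto intro: continuous_intros\<close>)
  show "(\<lambda>j. SSI n (\<lambda>x. gmul (zonal n (\<lambda>i. poly ((pderiv ^^ i) (p j))) x y) (H x)) S)
      \<longlonglongrightarrow> SSI n (\<lambda>x. gmul (zonal n (hderiv {-a..a} \<phi>) x y) (H x)) S"
    using SSI_zonal_harmonic_tendsto[OF assms(4,5)] by simp
qed

end
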